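(* Let $G$ and $H$ be graphs such that: (a) $G$ admits an automorphism $\eta$ with $\eta(v)\in N(v)$ for every $v\in V(G)$, and every orbit of $\eta$ has even length; (b) $H$ is bipartite and every vertex of $H$ has even degree. Then $\alpha_{\mathrm{od}}(\mu[G,H])\ge |H|\cdot\alpha_{\mathrm{od}}(G)$.
   Context: For graphs $G$ and $H$, $\mu[G,H]$ is the graph obtained by replacing each vertex $w\in V(H)$ with a copy $G_w$ of $G$ and, for every edge $w_1w_2\in E(H)$, adding the perfect matching between $G_{w_1}$ and $G_{w_2}$ that joins the two copies of each vertex of $G$ (i.e., $\mu[G,H]$ is the Cartesian product $G\,\Box\,H$). An odd independent set in a graph $F=(V,E)$ is an independent set $S$ such that every $v\in V\setminus S$ has either no neighbor or an odd number of neighbors in $S$; $\alpha_{\mathrm{od}}(F)$ is the maximum size of such a set. $|H|$ is the number of vertices of $H$; $N(v)$ is the open neighborhood. *)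

theory Defs
  imports Main
begin

definition graph :: "'a set \<Rightarrow> ('a \<Rightarrow> 'a \<Rightarrow> bool) \<Rightarrow> bool" where
  "graph V E \<longleftrightarrow> finite V \<and> (\<forall>x y. E x y \<longrightarrow> x \<in> V \<and> y \<in> V)
     \<and> (\<forall>x y. E x y \<longrightarrow> E y x) \<and> (\<forall>x. \<not> E x x)"

definition nbrs :: "'a set \<Rightarrow> ('a \<Rightarrow> 'a \<Rightarrow> bool) \<Rightarrow> 'a \<Rightarrow> 'a set" where
  "nbrs V E v = {u \<in> V. E v u}"

definition odd_indep :: "'a set \<Rightarrow> ('a \<Rightarrow> 'a \<Rightarrow> bool) \<Rightarrow> 'a set \<Rightarrow> bool" where
  "odd_indep V E S \<longleftrightarrow> S \<subseteq> V \<and> (\<forall>x\<in>S. \<forall>y\<in>S. \<not> E x y)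
     \<and> (\<forall>v \<in> V - S. card (nbrs V E v \<inter> S) = 0 \<or> odd (card (nbrs V E v \<inter> S)))"

definition alpha_od :: "'a set \<Rightarrow> ('a \<Rightarrow> 'a \<Rightarrow> bool) \<Rightarrow> nat" where
  "alpha_od V E = Max {card S | S. odd_indep V E S}"

text \<open>Cartesian product G \<box> H = mu[G,H].\<close>
definition cart_vert :: "'a set \<Rightarrow> 'b set \<Rightarrow> ('a \<times> 'b) set" where
  "cart_vert VG VH = VG \<times> VH"

definition cart_edge :: "'a set \<Rightarrow> ('a \<Rightarrow> 'a \<Rightarrow> bool) \<Rightarrow> 'b set \<Rightarrow> ('b \<Rightarrow> 'b \<Rightarrow> bool)
    \<Rightarrow> ('a \<times> 'b) \<Rightarrow> ('a \<times> 'b) \<Rightarrow> bool" where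
  "cart_edge VG EG VH EH p q \<longleftrightarrow> p \<in> VG \<times> VH \<and> q \<in> VG \<times> VH \<and>
     ((fst p = fst q \<and> EH (snd p) (snd q)) \<or> (snd p = snd q \<and> EG (fst p) (fst q)))"

definition automorphism :: "'a set \<Rightarrow> ('a \<Rightarrow> 'a \<Rightarrow> bool) \<Rightarrow> ('a \<Rightarrow> 'a) \<Rightarrow> bool" where
  "automorphism V E f \<longleftrightarrow> bij_betw f V V \<and> (\<forall>x\<in>V. \<forall>y\<in>V. E x y \<longleftrightarrow> E (f x) (f y))"

definition orbit :: "('a \<Rightarrow> 'a) \<Rightarrow> 'a \<Rightarrow> 'a set" where
  "orbit f v = {(f ^^ k) v | k. True}"

definition bipartite :: "'a set \<Rightarrow> ('a \<Rightarrow> 'a \<Rightarrow> bool) \<Rightarrow> bool" where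
  "bipartite V E \<longleftrightarrow> (\<exists>A B. A \<union> B = V \<and> A \<inter> B = {} \<and>
     (\<forall>x y. E x y \<longrightarrow> (x \<in> A \<and> y \<in> B) \<or> (x \<in> B \<and> y \<in> A)))"

end

theory Submission
  imports Defs
begin

(* Take a maximum odd independent set S of G and its image Q = \<eta> S, which is again odd
   independent. Since \<eta> v is adjacent to v, S and Q are disjoint and every vertex of either
   set has a neighbour in the other. For a bipartition A, B of H, the set S \<times> A \<union> Q \<times> B is
   odd independent in G \<box> H: a vertex (g, h) outside it with h \<in> A sees its neighbours in
   S inside the G-layer, plus all deg h of its H-neighbours if g \<in> Q; in that case g has a
   neighbour in S, so the count is odd plus even. *)

lemma finite_nbrs: "finite V \<Longrightarrow> finite (nbrs V E v)"
  by (simp add: nbrs_def)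

lemma finite_odd_indep_cards: "finite V \<Longrightarrow> finite {card S | S. odd_indep V E S}"
  by (rule finite_subset[where B = "card ` Pow V"]) (auto simp: odd_indep_def)

lemma odd_indep_empty: "odd_indep V E {}"
  by (simp add: odd_indep_def)

lemma alpha_od_attained:
  assumes "finite V"
  obtains S where "odd_indep V E S" and "card S = alpha_od V E"
proof -
  have "alpha_od V E \<in> {card S | S. odd_indep V E S}"
    unfolding alpha_od_def using finite_odd_indep_cards[OF assms] odd_indep_empty
    by (intro Max_in) auto
  then show thesis using that by auto
qed

lemma card_le_alpha_od: "finite V \<Longrightarrow> odd_indep V E S \<Longrightarrow> card S \<le> alpha_od V E"
  unfolding alpha_od_def by (intro Max_ge finite_odd_indep_cards) auto

lemma nbrs_automorphism:
  assumes "automorphism V E f" and "v \<in> V"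
  shows "nbrs V E (f v) = f ` nbrs V E v"
proof -
  have img: "f ` V = V" and edge: "\<forall>x\<in>V. \<forall>y\<in>V. E x y \<longleftrightarrow> E (f x) (f y)"
    using assms(1) by (auto simp: automorphism_def bij_betw_def)
  have "nbrs V E (f v) = {u \<in> f ` V. E (f v) u}"
    by (simp add: nbrs_def img)
  also have "\<dots> = f ` {w \<in> V. E (f v) (f w)}"
    by blast
  also have "{w \<in> V. E (f v) (f w)} = nbrs V E v"
    using edge assms(2) by (auto simp: nbrs_def)
  finally show ?thesis .
qed

lemma odd_indep_automorphism_image:
  assumes aut: "automorphism V E f" and S: "odd_indep V E S"
  shows "odd_indep V E (f ` S)"
proof -
  have inj: "inj_on f V" and img: "f ` V = V"
    and edge: "\<forall>x\<in>V. \<forall>y\<in>V. E x y \<longleftrightarrow> E (f x) (f y)"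
    using aut by (auto simp: automorphism_def bij_betw_def)
  have SV: "S \<subseteq> V" using S by (simp add: odd_indep_def)
  have card_nbrs: "card (nbrs V E (f v) \<inter> f ` S) = card (nbrs V E v \<inter> S)" if "v \<in> V" for v
  proof -
    have "nbrs V E (f v) \<inter> f ` S = f ` (nbrs V E v \<inter> S)"
      using nbrs_automorphism[OF aut that] inj_on_image_Int[OF inj _ SV]
      by (simp add: nbrs_def)
    moreover have "inj_on f (nbrs V E v \<inter> S)"
      by (rule inj_on_subset[OF inj]) (use SV in auto)
    ultimately show ?thesis by (simp add: card_image)
  qed
  show ?thesis
    unfolding odd_indep_def
  proof (intro conjI ballI)
    show "f ` S \<subseteq> V" using SV img by blast
    show "\<not> E x y" if "x \<in> f ` S" "y \<in> f ` S" for x y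
    proof -
      obtain a b where ab: "a \<in> S" "b \<in> S" "x = f a" "y = f b"
        using \<open>x \<in> f ` S\<close> \<open>y \<in> f ` S\<close> by blast
      then have "\<not> E a b" using S by (simp add: odd_indep_def)
      then show ?thesis using ab SV edge by blast
    qed
    fix w assume "w \<in> V - f ` S"
    then obtain v where "v \<in> V - S" "w = f v" using img by auto
    then show "card (nbrs V E w \<inter> f ` S) = 0 \<or> odd (card (nbrs V E w \<inter> f ` S))"
      using S card_nbrs by (auto simp: odd_indep_def)
  qed
qed

lemma odd_indep_adjacent_automorphism_image:
  assumes "graph V E" and aut: "automorphism V E f" and adj: "\<forall>v\<in>V. f v \<in> nbrs V E v"
    and S: "odd_indep V E S"
  shows "odd_indep V E (f ` S)" and "S \<inter> f ` S = {}"
    and "\<forall>v\<in>S. nbrs V E v \<inter> f ` S \<noteq> {}" and "\<forall>v\<in>f ` S. nbrs V E v \<inter> S \<noteq> {}"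
proof -
  have SV: "S \<subseteq> V" and S_indep: "\<forall>x\<in>S. \<forall>y\<in>S. \<not> E x y"
    using S by (simp_all add: odd_indep_def)
  have f_adj: "E v (f v)" "E (f v) v" if "v \<in> V" for v
    using assms(1) adj that by (auto simp: nbrs_def graph_def)
  show "odd_indep V E (f ` S)" using odd_indep_automorphism_image[OF aut S] .
  show "S \<inter> f ` S = {}" using S_indep SV f_adj by blast
  have "f v \<in> nbrs V E v \<inter> f ` S" "v \<in> nbrs V E (f v) \<inter> S" if "v \<in> S" for v
    using that SV f_adj adj by (auto simp: nbrs_def)
  then show "\<forall>v\<in>S. nbrs V E v \<inter> f ` S \<noteq> {}" "\<forall>v\<in>f ` S. nbrs V E v \<inter> S \<noteq> {}"
    by blast+
qed

lemma nbrs_cart_edge: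
  assumes "g \<in> VG" and "h \<in> VH"
  shows "nbrs (VG \<times> VH) (cart_edge VG EG VH EH) (g, h)
           = nbrs VG EG g \<times> {h} \<union> {g} \<times> nbrs VH EH h"
  using assms by (auto simp: nbrs_def cart_edge_def)

lemma card_nbrs_cart_edge_layers:
  assumes "finite VG" and "finite VH" and "g \<in> VG" and "h \<in> VH"
    and "h \<in> A" and "A \<inter> B = {}" and "nbrs VH EH h \<subseteq> B"
  shows "card (nbrs (VG \<times> VH) (cart_edge VG EG VH EH) (g, h) \<inter> (P \<times> A \<union> Q \<times> B))
           = card (nbrs VG EG g \<inter> P) + (if g \<in> Q then card (nbrs VH EH h) else 0)"
proof -
  have "nbrs (VG \<times> VH) (cart_edge VG EG VH EH) (g, h) \<inter> (P \<times> A \<union> Q \<times> B)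
          = (nbrs VG EG g \<inter> P) \<times> {h} \<union> (if g \<in> Q then {g} \<times> nbrs VH EH h else {})"
    using assms(3-7) by (auto simp: nbrs_cart_edge)
  moreover have "(nbrs VG EG g \<inter> P) \<times> {h} \<inter> {g} \<times> nbrs VH EH h = {}"
    using assms(5-7) by blast
  ultimately show ?thesis
    using finite_nbrs[OF assms(1), of EG g] finite_nbrs[OF assms(2), of EH h]
    by (simp add: card_Un_disjoint card_cartesian_product)
qed

lemma odd_card_nbrs_cart_edge_layers:
  assumes "finite VG" and "finite VH" and P: "odd_indep VG EG P"
    and Q_dominated: "\<forall>v\<in>Q. nbrs VG EG v \<inter> P \<noteq> {}"
    and "g \<in> VG - P" and "h \<in> VH" and "h \<in> A" and "A \<inter> B = {}"
    and "nbrs VH EH h \<subseteq> B" and "even (card (nbrs VH EH h))"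
  defines "k \<equiv> card (nbrs (VG \<times> VH) (cart_edge VG EG VH EH) (g, h) \<inter> (P \<times> A \<union> Q \<times> B))"
  shows "k = 0 \<or> odd k"
proof -
  have k: "k = card (nbrs VG EG g \<inter> P) + (if g \<in> Q then card (nbrs VH EH h) else 0)"
    unfolding k_def using assms by (intro card_nbrs_cart_edge_layers) auto
  have parity: "card (nbrs VG EG g \<inter> P) = 0 \<or> odd (card (nbrs VG EG g \<inter> P))"
    using P \<open>g \<in> VG - P\<close> by (simp add: odd_indep_def)
  show ?thesis
  proof (cases "g \<in> Q")
    case True
    then have "card (nbrs VG EG g \<inter> P) \<noteq> 0"
      using Q_dominated finite_nbrs[OF \<open>finite VG\<close>] by auto
    then show ?thesis using k parity True \<open>even (card (nbrs VH EH h))\<close> by simp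
  qed (use k parity in simp)
qed

lemma card_Times_layers:
  assumes "finite P" and "finite Q" and "card Q = card P"
    and "finite A" and "finite B" and "A \<inter> B = {}"
  shows "card (P \<times> A \<union> Q \<times> B) = card (A \<union> B) * card P"
proof -
  have "card (P \<times> A \<union> Q \<times> B) = card (P \<times> A) + card (Q \<times> B)"
    using assms by (intro card_Un_disjoint) auto
  also have "\<dots> = card P * (card A + card B)"
    using assms(3) by (simp add: card_cartesian_product algebra_simps)
  also have "card A + card B = card (A \<union> B)"
    using assms(4-6) by (simp add: card_Un_disjoint)
  finally show ?thesis by simp
qed

lemma odd_indep_cart_edge_layers:
  assumes gG: "graph VG EG" and gH: "graph VH EH"
    and P: "odd_indep VG EG P" and Q: "odd_indep VG EG Q" and PQ: "P \<inter> Q = {}"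
    and P_dominated: "\<forall>v\<in>P. nbrs VG EG v \<inter> Q \<noteq> {}"
    and Q_dominated: "\<forall>v\<in>Q. nbrs VG EG v \<inter> P \<noteq> {}"
    and AB: "A \<union> B = VH" "A \<inter> B = {}"
    and bip: "\<forall>x y. EH x y \<longrightarrow> (x \<in> A \<and> y \<in> B) \<or> (x \<in> B \<and> y \<in> A)"
    and even_deg: "\<forall>v\<in>VH. even (card (nbrs VH EH v))"
  shows "odd_indep (VG \<times> VH) (cart_edge VG EG VH EH) (P \<times> A \<union> Q \<times> B)"
  unfolding odd_indep_def
proof (intro conjI ballI)
  have fin: "finite VG" "finite VH" using gG gH by (simp_all add: graph_def)
  show "P \<times> A \<union> Q \<times> B \<subseteq> VG \<times> VH" using P Q AB by (auto simp: odd_indep_def)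
  show "\<not> cart_edge VG EG VH EH x y" if x: "x \<in> P \<times> A \<union> Q \<times> B" and y: "y \<in> P \<times> A \<union> Q \<times> B" for x y
  proof
    assume "cart_edge VG EG VH EH x y"
    then have "(fst x = fst y \<and> EH (snd x) (snd y)) \<or> (snd x = snd y \<and> EG (fst x) (fst y))"
      by (simp add: cart_edge_def)
    then show False
    proof
      assume adj: "fst x = fst y \<and> EH (snd x) (snd y)"
      then have "snd x \<in> A \<longleftrightarrow> snd y \<in> B" using bip AB(2) by blast
      then have "fst x \<in> P \<inter> Q" using x y adj AB(2) by auto
      then show False using PQ by blast
    next
      assume "snd x = snd y \<and> EG (fst x) (fst y)"
      then have "fst x \<in> P \<and> fst y \<in> P \<or> fst x \<in> Q \<and> fst y \<in> Q" using x y AB(2) by auto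
      then show False using P Q \<open>snd x = snd y \<and> EG (fst x) (fst y)\<close> by (auto simp: odd_indep_def)
    qed
  qed
  fix v assume v: "v \<in> VG \<times> VH - (P \<times> A \<union> Q \<times> B)"
  then obtain g h where gh: "v = (g, h)" "g \<in> VG" "h \<in> VH" by blast
  show "card (nbrs (VG \<times> VH) (cart_edge VG EG VH EH) v \<inter> (P \<times> A \<union> Q \<times> B)) = 0 \<or>
        odd (card (nbrs (VG \<times> VH) (cart_edge VG EG VH EH) v \<inter> (P \<times> A \<union> Q \<times> B)))"
  proof (cases "h \<in> A")
    case True
    then have "nbrs VH EH h \<subseteq> B" "g \<notin> P" using AB bip v gh by (auto simp: nbrs_def)
    then show ?thesis
      using odd_card_nbrs_cart_edge_layers[OF fin P Q_dominated, of g h A B] True gh AB(2) even_deg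
      by simp
  next
    case False
    then have "h \<in> B" "nbrs VH EH h \<subseteq> A" "g \<notin> Q" using AB bip v gh by (auto simp: nbrs_def)
    moreover have "P \<times> A \<union> Q \<times> B = Q \<times> B \<union> P \<times> A" by blast
    ultimately show ?thesis
      using odd_card_nbrs_cart_edge_layers[OF fin Q P_dominated, of g h B A] gh AB(2) even_deg
      by (simp add: Int_commute)
  qed
qed

theorem theorem3:
  fixes VG :: "'a set" and EG :: "'a \<Rightarrow> 'a \<Rightarrow> bool"
    and VH :: "'b set" and EH :: "'b \<Rightarrow> 'b \<Rightarrow> bool"
    and \<eta> :: "'a \<Rightarrow> 'a"
  assumes "graph VG EG" and "graph VH EH"
    and "automorphism VG EG \<eta>"
    and "\<forall>v\<in>VG. \<eta> v \<in> nbrs VG EG v"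
    and "\<forall>v\<in>VG. even (card (orbit \<eta> v))"
    and "bipartite VH EH"
    and "\<forall>v\<in>VH. even (card (nbrs VH EH v))"
  shows "alpha_od (cart_vert VG VH) (cart_edge VG EG VH EH) \<ge> card VH * alpha_od VG EG"
proof -
  have fin: "finite VG" "finite VH" using assms(1,2) by (simp_all add: graph_def)
  obtain S where S: "odd_indep VG EG S" and card_S: "card S = alpha_od VG EG"
    using alpha_od_attained[OF fin(1)] .
  obtain A B where AB: "A \<union> B = VH" "A \<inter> B = {}"
    and bip: "\<forall>x y. EH x y \<longrightarrow> (x \<in> A \<and> y \<in> B) \<or> (x \<in> B \<and> y \<in> A)"
    using assms(6) by (auto simp: bipartite_def)
  have "odd_indep (VG \<times> VH) (cart_edge VG EG VH EH) (S \<times> A \<union> \<eta> ` S \<times> B)"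
    using odd_indep_cart_edge_layers[OF assms(1,2) S _ _ _ _ AB bip assms(7)]
      odd_indep_adjacent_automorphism_image[OF assms(1,3,4) S] by blast
  moreover have "card (S \<times> A \<union> \<eta> ` S \<times> B) = card VH * card S"
  proof -
    have SV: "S \<subseteq> VG" using S by (simp add: odd_indep_def)
    then have "card (\<eta> ` S) = card S"
      using assms(3) by (intro card_image) (auto simp: automorphism_def bij_betw_def intro: inj_on_subset)
    then show ?thesis
      using card_Times_layers[of S "\<eta> ` S" A B] AB fin finite_subset[OF SV] by auto
  qed
  ultimately show ?thesis
    using card_le_alpha_od[of "VG \<times> VH"] fin card_S by (fastforce simp: cart_vert_def)
qed

end
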